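(* There exists a partition of $\mathbb R$ into two sets $A,B$ such that each of $A$ and $B$ is a Bernstein set and neither $A$ nor $B$ is a $2$-covering.
   Context: A set $B\subseteq\mathbb R$ is a Bernstein set if for every uncountable Borel set $Z\subseteq\mathbb R$ both $Z\cap B$ and $Z\setminus B$ are nonempty. For a cardinal $\kappa$, a set $A\subseteq\mathbb R$ is a $\kappa$-covering if for every $B\subseteq\mathbb R$ with $|B|=\kappa$ there is $x\in\mathbb R$ with $B+x\subseteq A$. *)

theory Defs
  imports "HOL-Analysis.Analysis"
begin

definition bernstein_set :: "real set \<Rightarrow> bool" where
  "bernstein_set B \<longleftrightarrow>
     (\<forall>Z \<in> sets borel. uncountable Z \<longrightarrow> Z \<inter> B \<noteq> {} \<and> Z - B \<noteq> {})"

definition n_covering :: "nat \<Rightarrow> real set \<Rightarrow> bool" where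
  "n_covering n A \<longleftrightarrow>
     (\<forall>B :: real set. finite B \<and> card B = n \<longrightarrow> (\<exists>x::real. (\<lambda>b. b + x) ` B \<subseteq> A))"

end

theory Submission
  imports Defs
begin

text \<open>A Bernstein set \<open>S\<close> comes from the classical transfinite construction: there are only
  continuum many closed sets, and every uncountable Borel set contains a closed set of size
  continuum (Borel sets are analytic, and a Cantor scheme inside an uncountable analytic set
  yields such a closed set), so all closed sets of size continuum can be split by a recursion
  of length continuum. Putting a copy of \<open>S \<inter> [0,1)\<close> on every even unit interval and a copy
  of its complement on every odd one gives a Bernstein set \<open>A\<close> with \<open>x + 1 \<in> A \<longleftrightarrow> x \<notin> A\<close>;
  hence neither \<open>A\<close> nor its complement contains a translate of \<open>{0, 1}\<close>.\<close>

unbundle cardinal_syntax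

section \<open>Splitting a family of large sets\<close>

lemma two_points_outside_smaller_set:
  assumes "infinite K" "|U| <o |K|"
  obtains a b where "a \<in> K - U" "b \<in> K - U" "a \<noteq> b"
proof -
  have "infinite (K - U)"
  proof
    assume "finite (K - U)"
    then have "|K - U| <o |K|"
      using \<open>infinite K\<close> by (meson card_of_Well_order card_of_ordLeq_finite not_ordLeq_iff_ordLess)
    then have "|U \<union> (K - U)| <o |K|"
      using card_of_Un_ordLess_infinite assms by blast
    moreover have "|K| \<le>o |U \<union> (K - U)|"
      by (rule card_of_mono1) blast
    ultimately show False
      using not_ordLess_ordLeq by blast
  qed
  then obtain a where "a \<in> K - U"
    by (metis infinite_imp_nonempty ex_in_conv)
  moreover have "infinite (K - U - {a})"
    using \<open>infinite (K - U)\<close> by simp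
  then obtain b where "b \<in> K - U - {a}"
    by (metis infinite_imp_nonempty ex_in_conv)
  ultimately show thesis
    using that by blast
qed

text \<open>Transfinite recursion along a well-order of the family of length \<open>|KK|\<close>: at stage \<open>K\<close>
  pick two points of \<open>K\<close> that were not picked at any earlier stage; the first goes into \<open>S\<close>,
  the second is kept out of \<open>S\<close> forever.\<close>

lemma exists_splitting_set:
  fixes KK :: "'a set set"
  assumes large: "\<And>K. K \<in> KK \<Longrightarrow> infinite K \<and> |KK| \<le>o |K|"
  shows "\<exists>S. \<forall>K\<in>KK. K \<inter> S \<noteq> {} \<and> K - S \<noteq> {}"
proof -
  define r where "r = |KK|"
  have wo: "wo_rel r"
    unfolding r_def wo_rel_def by (rule card_of_Well_order)
  have Field_r: "Field r = KK"
    unfolding r_def by (rule Field_card_of)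
  define used where
    "used w K = (fst \<circ> w) ` underS r K \<union> (snd \<circ> w) ` underS r K" for w :: "'a set \<Rightarrow> 'a \<times> 'a" and K
  define fresh where
    "fresh w K p \<longleftrightarrow> fst p \<in> K - used w K \<and> snd p \<in> K - used w K \<and> fst p \<noteq> snd p" for w K p
  define w where "w = wo_rel.worec r (\<lambda>w K. SOME p. fresh w K p)"
  have "wo_rel.adm_wo r (\<lambda>w K. SOME p. fresh w K p)"
    unfolding wo_rel.adm_wo_def[OF wo] fresh_def used_def by (auto simp: image_def)
  then have w_eq: "w K = (SOME p. fresh w K p)" for K
    unfolding w_def by (metis wo_rel.worec_fixpoint[OF wo])
  have fresh_w: "fresh w K (w K)" if K: "K \<in> KK" for K
  proof -
    have "|underS r K| <o |K|"
      using card_of_underS[of r K] card_of_Card_order[of KK] large[OF K] K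
      unfolding r_def Field_card_of by (blast intro: ordLess_ordLeq_trans)
    then have "|(fst \<circ> w) ` underS r K| <o |K|" "|(snd \<circ> w) ` underS r K| <o |K|"
      by (blast intro: ordLeq_ordLess_trans[OF card_of_image])+
    then have "|used w K| <o |K|"
      unfolding used_def using large[OF K] card_of_Un_ordLess_infinite by blast
    then obtain a b where "a \<in> K - used w K" "b \<in> K - used w K" "a \<noteq> b"
      using two_points_outside_smaller_set large[OF K] by blast
    then have "fresh w K (a, b)"
      unfolding fresh_def by simp
    then show ?thesis
      unfolding w_eq[of K] by (rule someI)
  qed
  define S where "S = (fst \<circ> w) ` KK"
  have "snd (w K) \<notin> S" if K: "K \<in> KK" for K
  proof
    assume "snd (w K) \<in> S"
    then obtain K' where K': "K' \<in> KK" "snd (w K) = fst (w K')"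
      unfolding S_def by auto
    consider "K' = K" | "K' \<in> underS r K" | "K \<in> underS r K'"
      using wo_rel.TOTALS[OF wo] K K' unfolding Field_r underS_def by blast
    then show False
    proof cases
      case 1
      then show False
        using fresh_w[OF K] K'(2) unfolding fresh_def by simp
    next
      case 2
      then have "fst (w K') \<in> used w K"
        unfolding used_def by simp
      then show False
        using fresh_w[OF K] K'(2) unfolding fresh_def by simp
    next
      case 3
      then have "snd (w K) \<in> used w K'"
        unfolding used_def by simp
      then show False
        using fresh_w[OF K'(1)] K'(2) unfolding fresh_def by simp
    qed
  qed
  moreover have "fst (w K) \<in> K \<inter> S" if "K \<in> KK" for K
    using fresh_w[OF that] that unfolding fresh_def S_def by auto
  ultimately show ?thesis
    using fresh_w unfolding fresh_def by blast
qed


section \<open>Closed sets of size continuum in uncountable continuous images\<close>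

lemma small_halving_power:
  assumes "0 < e"
  obtains n where "2 * (1/2::real) ^ n < e"
proof -
  obtain n where "(1/2::real) ^ n < e/2"
    using real_arch_pow_inv[of "e/2" "1/2"] assms by auto
  then show thesis
    using that[of n] by simp
qed

lemma cball_diameter:
  assumes "x \<in> cball c s" "y \<in> cball c s"
  shows "dist x y \<le> 2 * s"
  using assms dist_triangle[of x y c] by (simp add: dist_commute)

locale uncountable_image =
  fixes F :: "'a::polish_space set" and f :: "'a \<Rightarrow> 'b::metric_space"
  assumes closed_F: "closed F"
    and continuous_f: "continuous_on F f"
    and uncountable_f_F: "uncountable (f ` F)"
begin

definition condensation :: "'a set" where
  "condensation = {x \<in> F. \<forall>e>0. uncountable (f ` (F \<inter> ball x e))}"

lemma condensation_subset: "condensation \<subseteq> F"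
  unfolding condensation_def by auto

lemma countable_image_non_condensation: "countable (f ` (F - condensation))"
proof -
  obtain B :: "'a set set" where B: "countable B" "topological_basis B"
    using ex_countable_basis by blast
  define B' where "B' = {b \<in> B. countable (f ` (F \<inter> b))}"
  have "f ` (F - condensation) \<subseteq> (\<Union>b\<in>B'. f ` (F \<inter> b))"
  proof
    fix y assume "y \<in> f ` (F - condensation)"
    then obtain x where x: "x \<in> F" "x \<notin> condensation" "y = f x"
      by auto
    then obtain e where "e > 0" "countable (f ` (F \<inter> ball x e))"
      unfolding condensation_def by blast
    moreover obtain b where "b \<in> B" "x \<in> b" "b \<subseteq> ball x e"
      using topological_basisE[OF B(2) open_ball] \<open>e > 0\<close> by (metis centre_in_ball)
    moreover have "f ` (F \<inter> b) \<subseteq> f ` (F \<inter> ball x e)"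
      using \<open>b \<subseteq> ball x e\<close> by blast
    ultimately have "b \<in> B'"
      unfolding B'_def using countable_subset by blast
    then show "y \<in> (\<Union>b\<in>B'. f ` (F \<inter> b))"
      using \<open>x \<in> b\<close> x by blast
  qed
  moreover have "countable (\<Union>b\<in>B'. f ` (F \<inter> b))"
    using countable_subset[of B' B] B(1) unfolding B'_def by auto
  ultimately show ?thesis
    by (rule countable_subset)
qed

lemma uncountable_image_condensation_ball:
  assumes "x \<in> condensation" "e > 0"
  shows "uncountable (f ` (condensation \<inter> ball x e))"
proof
  assume "countable (f ` (condensation \<inter> ball x e))"
  moreover have "f ` (F \<inter> ball x e) \<subseteq> f ` (condensation \<inter> ball x e) \<union> f ` (F - condensation)"
    by blast
  ultimately have "countable (f ` (F \<inter> ball x e))"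
    using countable_image_non_condensation by (meson countable_Un countable_subset)
  then show False
    using assms unfolding condensation_def by auto
qed

lemma condensation_nonempty: "condensation \<noteq> {}"
  using uncountable_f_F countable_image_non_condensation by auto

text \<open>A node of level \<open>n\<close> of the Cantor scheme is a triple \<open>(p, r, \<epsilon>)\<close>: the part of \<open>F\<close> in
  the ball \<open>cball p r\<close> around a condensation point \<open>p\<close> is mapped into \<open>cball (f p) \<epsilon>\<close>.\<close>

fun node :: "nat \<Rightarrow> 'a \<times> real \<times> real \<Rightarrow> bool" where
  "node n (p, r, \<epsilon>) \<longleftrightarrow> p \<in> condensation \<and> 0 < r \<and> r \<le> (1/2) ^ n \<and> 0 < \<epsilon> \<and> \<epsilon> \<le> (1/2) ^ n \<and>
     f ` (F \<inter> cball p r) \<subseteq> cball (f p) \<epsilon>"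

fun dom_ball :: "'a \<times> real \<times> real \<Rightarrow> 'a set" where
  "dom_ball (p, r, \<epsilon>) = cball p r"

fun img_ball :: "'a \<times> real \<times> real \<Rightarrow> 'b set" where
  "img_ball (p, r, \<epsilon>) = cball (f p) \<epsilon>"

lemma node_dom_ball_nonempty: "node n nd \<Longrightarrow> F \<inter> dom_ball nd \<noteq> {}"
  using condensation_subset by (cases nd) fastforce

lemma node_image_subset: "node n nd \<Longrightarrow> f ` (F \<inter> dom_ball nd) \<subseteq> img_ball nd"
  by (cases nd) simp

lemma node_diameters:
  assumes "node n nd"
  shows "\<And>x y. x \<in> dom_ball nd \<Longrightarrow> y \<in> dom_ball nd \<Longrightarrow> dist x y \<le> 2 * (1/2) ^ n"
    and "\<And>x y. x \<in> img_ball nd \<Longrightarrow> y \<in> img_ball nd \<Longrightarrow> dist x y \<le> 2 * (1/2) ^ n"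
  using assms cball_diameter[of _ "f (fst nd)"] cball_diameter[of _ "fst nd"]
  by (cases nd; fastforce)+

lemma node_around:
  assumes "p \<in> condensation" "0 < \<rho>" "0 < \<epsilon>" "\<epsilon> \<le> (1/2) ^ n"
  obtains r where "node n (p, r, \<epsilon>)" "r \<le> \<rho>"
proof -
  obtain d where "d > 0" and d: "\<forall>x\<in>F. dist x p < d \<longrightarrow> dist (f x) (f p) < \<epsilon>"
    using continuous_f assms(1,3) condensation_subset unfolding continuous_on_iff by blast
  define r where "r = min (d/2) (min \<rho> ((1/2) ^ n))"
  have "f ` (F \<inter> cball p r) \<subseteq> cball (f p) \<epsilon>"
    using d \<open>d > 0\<close> by (force simp: r_def dist_commute)
  then have "node n (p, r, \<epsilon>)"
    using assms \<open>d > 0\<close> by (simp add: r_def)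
  then show thesis
    by (rule that) (simp add: r_def)
qed

definition splits :: "nat \<Rightarrow> 'a \<times> real \<times> real \<Rightarrow> (bool \<Rightarrow> 'a \<times> real \<times> real) \<Rightarrow> bool" where
  "splits n nd c \<longleftrightarrow> (\<forall>i. node (Suc n) (c i) \<and> dom_ball (c i) \<subseteq> dom_ball nd)
     \<and> img_ball (c True) \<inter> img_ball (c False) = {}"

lemma exists_node: "\<exists>nd. node 0 nd"
proof -
  obtain p where "p \<in> condensation"
    using condensation_nonempty by blast
  then obtain r where "node 0 (p, r, 1)"
    by (rule node_around[of p 1 1 0]) auto
  then show ?thesis ..
qed

lemma node_inside_ball:
  assumes "q \<in> condensation \<inter> ball p r" "0 < \<epsilon>" "\<epsilon> \<le> (1/2) ^ n"
  obtains r' where "node n (q, r', \<epsilon>)" "cball q r' \<subseteq> cball p r"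
proof -
  obtain r' where r': "node n (q, r', \<epsilon>)" "r' \<le> r - dist p q"
    using assms by (auto intro: node_around[of q "r - dist p q" \<epsilon> n])
  have "cball q r' \<subseteq> cball p r"
  proof
    fix x assume "x \<in> cball q r'"
    then show "x \<in> cball p r"
      using r'(2) dist_triangle[of p x q] by simp
  qed
  with r'(1) show thesis
    by (rule that)
qed

lemma condensation_points_distinct_images:
  assumes "p \<in> condensation" "0 < r"
  obtains p0 p1 where "p0 \<in> condensation \<inter> ball p r" "p1 \<in> condensation \<inter> ball p r" "f p0 \<noteq> f p1"
proof -
  have unc: "uncountable (f ` (condensation \<inter> ball p r))"
    using assms by (rule uncountable_image_condensation_ball)
  then have "condensation \<inter> ball p r \<noteq> {}"
    by auto
  then obtain p0 where p0: "p0 \<in> condensation \<inter> ball p r"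
    by blast
  have "\<not> f ` (condensation \<inter> ball p r) \<subseteq> {f p0}"
  proof
    assume "f ` (condensation \<inter> ball p r) \<subseteq> {f p0}"
    then have "countable (f ` (condensation \<inter> ball p r))"
      by (rule countable_subset) simp
    with unc show False ..
  qed
  then obtain p1 where "p1 \<in> condensation \<inter> ball p r" "f p1 \<noteq> f p0"
    by blast
  with p0 show thesis
    using that by metis
qed

lemma exists_splitting:
  assumes "node n nd"
  shows "\<exists>c. splits n nd c"
proof -
  obtain p r \<epsilon> where nd: "nd = (p, r, \<epsilon>)"
    by (cases nd)
  have "p \<in> condensation" "r > 0"
    using assms nd by auto
  then obtain p0 p1 where p01: "p0 \<in> condensation \<inter> ball p r" "p1 \<in> condensation \<inter> ball p r"
    and "f p0 \<noteq> f p1"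
    by (rule condensation_points_distinct_images)
  define \<eta> where "\<eta> = min (dist (f p0) (f p1) / 3) ((1/2) ^ Suc n)"
  have \<eta>: "0 < \<eta>" "\<eta> \<le> (1/2) ^ Suc n" "\<eta> + \<eta> < dist (f p0) (f p1)"
  proof -
    have "0 < dist (f p0) (f p1)"
      using \<open>f p0 \<noteq> f p1\<close> by simp
    moreover have "\<eta> \<le> dist (f p0) (f p1) / 3"
      unfolding \<eta>_def by simp
    ultimately show "\<eta> + \<eta> < dist (f p0) (f p1)"
      by linarith
    show "0 < \<eta>" "\<eta> \<le> (1/2) ^ Suc n"
      using \<open>f p0 \<noteq> f p1\<close> by (auto simp: \<eta>_def)
  qed
  obtain r0 r1 where "node (Suc n) (p0, r0, \<eta>)" "cball p0 r0 \<subseteq> cball p r"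
    "node (Suc n) (p1, r1, \<eta>)" "cball p1 r1 \<subseteq> cball p r"
    using node_inside_ball[OF p01(1) \<eta>(1,2)] node_inside_ball[OF p01(2) \<eta>(1,2)] by metis
  moreover have "cball (f p0) \<eta> \<inter> cball (f p1) \<eta> = {}"
    using \<eta>(3) by (rule disjoint_cballI)
  ultimately have "splits n nd (\<lambda>i. if i then (p0, r0, \<eta>) else (p1, r1, \<eta>))"
    unfolding splits_def nd by simp
  then show ?thesis
    by blast
qed

definition root :: "'a \<times> real \<times> real" where
  "root = (SOME nd. node 0 nd)"

definition child :: "nat \<Rightarrow> 'a \<times> real \<times> real \<Rightarrow> bool \<Rightarrow> 'a \<times> real \<times> real" where
  "child n nd = (SOME c. splits n nd c)"

primrec branch :: "(nat \<Rightarrow> bool) \<Rightarrow> nat \<Rightarrow> 'a \<times> real \<times> real" where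
  "branch b 0 = root"
| "branch b (Suc n) = child n (branch b n) (b n)"

lemma node_branch: "node n (branch b n)"
proof (induction n)
  case 0
  then show ?case
    unfolding branch.simps root_def using exists_node by (rule someI_ex)
next
  case (Suc n)
  have "splits n (branch b n) (child n (branch b n))"
    unfolding child_def by (rule someI_ex[OF exists_splitting[OF Suc.IH]])
  then show ?case
    unfolding splits_def by simp
qed

lemma splits_branch: "splits n (branch b n) (child n (branch b n))"
  unfolding child_def by (rule someI_ex[OF exists_splitting[OF node_branch]])

lemma dom_ball_branch_antimono: "n \<le> m \<Longrightarrow> dom_ball (branch b m) \<subseteq> dom_ball (branch b n)"
proof (induction m rule: dec_induct)
  case (step m)
  then show ?case
    using splits_branch[of m b] unfolding splits_def by auto
qed simp

lemma branch_cong: "(\<And>i. i < n \<Longrightarrow> b i = b' i) \<Longrightarrow> branch b n = branch b' n"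
  by (induction n) auto

lemma closed_dom_ball: "closed (dom_ball nd)"
  by (cases nd) simp

lemma closed_img_ball: "closed (img_ball nd)"
  by (cases nd) simp

definition limit :: "(nat \<Rightarrow> bool) \<Rightarrow> 'a" where
  "limit b = (SOME x. \<forall>n. x \<in> F \<inter> dom_ball (branch b n))"

lemma limit_in_dom_ball: "limit b \<in> F \<inter> dom_ball (branch b n)"
proof -
  obtain x where "\<And>n. x \<in> F \<inter> dom_ball (branch b n)"
  proof (rule decreasing_closed_nest)
    show "closed (F \<inter> dom_ball (branch b n))" for n
      using closed_F closed_dom_ball by blast
    show "F \<inter> dom_ball (branch b n) \<noteq> {}" for n
      using node_dom_ball_nonempty[OF node_branch] .
    show "F \<inter> dom_ball (branch b n) \<subseteq> F \<inter> dom_ball (branch b m)" if "m \<le> n" for m n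
      using dom_ball_branch_antimono[OF that] by blast
    show "\<exists>n. \<forall>x\<in>F \<inter> dom_ball (branch b n). \<forall>y\<in>F \<inter> dom_ball (branch b n). dist x y < e"
      if e: "e > 0" for e
    proof -
      obtain n where "2 * (1/2) ^ n < e"
        using small_halving_power[OF e] by blast
      have "dist x y < e" if "x \<in> F \<inter> dom_ball (branch b n)" "y \<in> F \<inter> dom_ball (branch b n)" for x y
        using node_diameters(1)[OF node_branch[of n b], of x y] that \<open>2 * (1/2) ^ n < e\<close> by auto
      then show ?thesis
        by blast
    qed
  qed blast
  then have "\<forall>n. x \<in> F \<inter> dom_ball (branch b n)"
    by blast
  then show ?thesis
    unfolding limit_def by (rule someI2) blast
qed

definition image_closure :: "'a \<times> real \<times> real \<Rightarrow> 'b set" where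
  "image_closure nd = closure (f ` (F \<inter> dom_ball nd))"

lemma image_closure_subset_img_ball: "node n nd \<Longrightarrow> image_closure nd \<subseteq> img_ball nd"
  unfolding image_closure_def by (rule closure_minimal[OF node_image_subset closed_img_ball])

lemma image_closure_branch_antimono:
  "n \<le> m \<Longrightarrow> image_closure (branch b m) \<subseteq> image_closure (branch b n)"
  unfolding image_closure_def by (intro closure_mono image_mono Int_mono order_refl dom_ball_branch_antimono)

lemma f_limit_in_image_closure: "f (limit b) \<in> image_closure (branch b n)"
  unfolding image_closure_def using limit_in_dom_ball[of b n] by (intro closure_subset[THEN subsetD]) simp

text \<open>The two children of a node have disjoint image balls.\<close>

lemma branches_agree_if_image_closures_meet:
  assumes "y \<in> image_closure (branch b n)" "y \<in> image_closure (branch b' n)"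
  shows "\<forall>i<n. b i = b' i"
  using assms
proof (induction n)
  case (Suc n)
  have "y \<in> image_closure (branch b n)" "y \<in> image_closure (branch b' n)"
    using Suc.prems image_closure_branch_antimono[of n "Suc n"] by auto
  then have agree: "\<forall>i<n. b i = b' i"
    by (rule Suc.IH)
  define nd where "nd = branch b n"
  have "branch b' n = nd"
    unfolding nd_def by (rule branch_cong) (use agree in simp)
  then have "y \<in> img_ball (child n nd (b n))" "y \<in> img_ball (child n nd (b' n))"
    using Suc.prems image_closure_subset_img_ball[OF node_branch[of "Suc n" b]]
      image_closure_subset_img_ball[OF node_branch[of "Suc n" b']]
    unfolding nd_def by auto
  moreover have "img_ball (child n nd (b n)) \<inter> img_ball (child n nd (\<not> b n)) = {}"
    using splits_branch[of n b] unfolding splits_def nd_def by (cases "b n") (simp_all add: Int_commute)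
  ultimately have "b' n = b n"
    by (cases "b' n = b n") (simp_all add: disjoint_iff)
  with agree show ?case
    by (simp add: less_Suc_eq)
qed simp

lemma image_closures_branch_limit:
  assumes "\<And>n. y \<in> image_closure (branch b n)"
  shows "y = f (limit b)"
proof (rule ccontr)
  assume "y \<noteq> f (limit b)"
  then obtain n where n: "2 * (1/2) ^ n < dist y (f (limit b))"
    using small_halving_power[of "dist y (f (limit b))"] by auto
  have "y \<in> img_ball (branch b n)" "f (limit b) \<in> img_ball (branch b n)"
    using assms f_limit_in_image_closure image_closure_subset_img_ball[OF node_branch] by blast+
  then have "dist y (f (limit b)) \<le> 2 * (1/2) ^ n"
    by (rule node_diameters(2)[OF node_branch])
  with n show False
    by linarith
qed

definition level :: "nat \<Rightarrow> 'b set" where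
  "level n = (\<Union>b. image_closure (branch b n))"

lemma closed_level: "closed (level n)"
proof -
  have truncate: "branch b n = branch (\<lambda>i. i \<in> {i. i < n \<and> b i}) n" for b
    by (rule branch_cong) simp
  have "level n = (\<Union>S\<in>Pow {..<n}. image_closure (branch (\<lambda>i. i \<in> S) n))"
  proof
    show "level n \<subseteq> (\<Union>S\<in>Pow {..<n}. image_closure (branch (\<lambda>i. i \<in> S) n))"
      unfolding level_def
    proof (rule UN_least)
      fix b
      show "image_closure (branch b n) \<subseteq> (\<Union>S\<in>Pow {..<n}. image_closure (branch (\<lambda>i. i \<in> S) n))"
        by (subst truncate) (rule UN_upper, auto)
    qed
    show "(\<Union>S\<in>Pow {..<n}. image_closure (branch (\<lambda>i. i \<in> S) n)) \<subseteq> level n"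
      unfolding level_def by (intro UN_least UN_upper) simp
  qed
  moreover have "closed (image_closure nd)" for nd
    unfolding image_closure_def by simp
  ultimately show ?thesis
    by (simp add: closed_UN)
qed

theorem closed_continuum_subset_image:
  "\<exists>K. closed K \<and> K \<subseteq> f ` F \<and> |UNIV :: (nat \<Rightarrow> bool) set| \<le>o |K|"
proof (intro exI conjI)
  define K where "K = (\<Inter>n. level n)"
  show "closed K"
    unfolding K_def using closed_level by (simp add: closed_INT)
  have "inj (f \<circ> limit)"
  proof
    fix b b' assume "(f \<circ> limit) b = (f \<circ> limit) b'"
    then have "f (limit b) \<in> image_closure (branch b' (Suc i))" for i
      using f_limit_in_image_closure[of b' "Suc i"] by simp
    then have "b i = b' i" for i
      using branches_agree_if_image_closures_meet[OF f_limit_in_image_closure] by blast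
    then show "b = b'" ..
  qed
  moreover have "range (f \<circ> limit) \<subseteq> K"
    unfolding K_def level_def using f_limit_in_image_closure by (auto simp: image_subset_iff)
  ultimately show "|UNIV :: (nat \<Rightarrow> bool) set| \<le>o |K|"
    using card_of_ordLeq by blast
  show "K \<subseteq> f ` F"
  proof
    fix y assume "y \<in> K"
    then have "\<forall>n. \<exists>b. y \<in> image_closure (branch b n)"
      unfolding K_def level_def by simp
    then obtain B where B: "\<And>n. y \<in> image_closure (branch (B n) n)"
      by metis
    \<comment> \<open>the first \<open>Suc i\<close> bits of \<open>B (Suc i)\<close> agree with those of every later \<open>B n\<close>\<close>
    define c where "c i = B (Suc i) i" for i
    have "branch c n = branch (B n) n" for n
    proof (rule branch_cong)
      fix i assume "i < n"
      then have "y \<in> image_closure (branch (B n) (Suc i))"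
        using B image_closure_branch_antimono[of "Suc i" n] by auto
      then show "c i = B n i"
        using branches_agree_if_image_closures_meet[OF B[of "Suc i"]] unfolding c_def by simp
    qed
    then have "y = f (limit c)"
      using B by (intro image_closures_branch_limit) simp
    then show "y \<in> f ` F"
      using limit_in_dom_ball[of c 0] by simp
  qed
qed

end


section \<open>Analytic sets\<close>

text \<open>Suslin's analytic sets, with \<open>nat \<Rightarrow> real\<close> in the role of Baire space.\<close>

definition analytic :: "real set \<Rightarrow> bool" where
  "analytic S \<longleftrightarrow> (\<exists>F :: (nat \<Rightarrow> real) set. \<exists>f. closed F \<and> continuous_on F f \<and> f ` F = S)"

lemma analytic_closed:
  assumes "closed C"
  shows "analytic C"
proof -
  define F where "F = (\<lambda>x::nat \<Rightarrow> real. x 0) -` C \<inter> (\<Inter>n. (\<lambda>x::nat \<Rightarrow> real. x (Suc n)) -` {0})"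
  have cont: "continuous_on UNIV (\<lambda>x::nat \<Rightarrow> real. x n)" for n
    by (rule continuous_on_product_coordinates)
  have "closed F"
    unfolding F_def using assms by (intro closed_Int closed_INT ballI closed_vimage cont) auto
  moreover have "(\<lambda>x. x 0) ` F = C"
  proof
    show "C \<subseteq> (\<lambda>x. x 0) ` F"
    proof
      fix c assume "c \<in> C"
      then have "(\<lambda>n. if n = 0 then c else 0) \<in> F"
        unfolding F_def by auto
      then show "c \<in> (\<lambda>x. x 0) ` F"
        by (rule rev_image_eqI) simp
    qed
  qed (auto simp: F_def)
  ultimately show ?thesis
    unfolding analytic_def using continuous_on_subset[OF cont[of 0], of F] by blast
qed

lemma Nats_convergent_eventually_constant:
  fixes u :: "nat \<Rightarrow> real"
  assumes "\<And>k. u k \<in> \<nat>" "u \<longlonglongrightarrow> l"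
  shows "l \<in> \<nat>" "eventually (\<lambda>k. u k = l) sequentially"
proof -
  obtain N where N: "\<And>k. k \<ge> N \<Longrightarrow> dist (u k) l < 1/2"
    using metric_LIMSEQ_D[OF assms(2), of "1/2"] by auto
  have "u k = u N" if "k \<ge> N" for k
  proof -
    obtain i j where "u k = of_nat i" "u N = of_nat j"
      using assms(1) Nats_cases by metis
    moreover have "dist (u k) (u N) < 1"
      using N[OF that] N[of N] dist_triangle_half_l[of "u k" l 1 "u N"] by (simp add: dist_commute)
    ultimately show ?thesis
      by (simp add: dist_real_def)
  qed
  then have "eventually (\<lambda>k. u k = u N) sequentially"
    using eventually_sequentially by blast
  then have "l = u N"
    using tendsto_eventually LIMSEQ_unique assms(2) by blast
  then show "l \<in> \<nat>" "eventually (\<lambda>k. u k = l) sequentially"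
    using assms(1) \<open>eventually (\<lambda>k. u k = u N) sequentially\<close> by simp_all
qed

lemma analytic_family:
  fixes S :: "nat \<Rightarrow> real set"
  assumes "\<And>n. analytic (S n)"
  obtains Fs :: "nat \<Rightarrow> (nat \<Rightarrow> real) set" and fs
  where "\<And>n. closed (Fs n)" "\<And>n. continuous_on (Fs n) (fs n)" "\<And>n. fs n ` Fs n = S n"
  using assms unfolding analytic_def by metis

definition tail_seq :: "(nat \<Rightarrow> 'a) \<Rightarrow> nat \<Rightarrow> 'a" where
  "tail_seq x = (\<lambda>k. x (Suc k))"

lemma tendsto_tail_seq:
  fixes xs :: "nat \<Rightarrow> nat \<Rightarrow> 'a::topological_space"
  assumes "xs \<longlonglongrightarrow> l"
  shows "(\<lambda>k. tail_seq (xs k)) \<longlonglongrightarrow> tail_seq l"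
proof -
  have "continuous_on UNIV (tail_seq :: (nat \<Rightarrow> 'a) \<Rightarrow> _)"
    unfolding tail_seq_def
    by (intro continuous_on_coordinatewise_then_product continuous_on_product_coordinates)
  then show ?thesis
    using assms by (rule continuous_on_tendsto_compose) auto
qed

text \<open>The first coordinate of a point of the tagged domain is the index \<open>n\<close> of the piece
  \<open>Fs n\<close> containing the remaining coordinates.\<close>

definition tagged_domain :: "(nat \<Rightarrow> (nat \<Rightarrow> real) set) \<Rightarrow> (nat \<Rightarrow> real) set" where
  "tagged_domain Fs = {x. x 0 \<in> \<nat> \<and> tail_seq x \<in> Fs (nat \<lfloor>x 0\<rfloor>)}"

definition tagged_map :: "(nat \<Rightarrow> (nat \<Rightarrow> real) \<Rightarrow> 'a) \<Rightarrow> (nat \<Rightarrow> real) \<Rightarrow> 'a" where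
  "tagged_map fs x = fs (nat \<lfloor>x 0\<rfloor>) (tail_seq x)"

lemma tagged_domain_tendsto:
  assumes "\<And>k. xs k \<in> tagged_domain Fs" "xs \<longlonglongrightarrow> l"
  shows "l 0 \<in> \<nat>"
    and "eventually (\<lambda>k. nat \<lfloor>xs k 0\<rfloor> = nat \<lfloor>l 0\<rfloor>) sequentially"
    and "eventually (\<lambda>k. tail_seq (xs k) \<in> Fs (nat \<lfloor>l 0\<rfloor>)) sequentially"
proof -
  have "(\<lambda>k. xs k 0) \<longlonglongrightarrow> l 0"
    using assms(2) by (rule continuous_on_tendsto_compose[OF continuous_on_product_coordinates]) auto
  then have "l 0 \<in> \<nat>" and ev: "eventually (\<lambda>k. xs k 0 = l 0) sequentially"
    using Nats_convergent_eventually_constant[of "\<lambda>k. xs k 0" "l 0"] assms(1)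
    unfolding tagged_domain_def by auto
  then show "l 0 \<in> \<nat>"
    by blast
  from ev show ev_index: "eventually (\<lambda>k. nat \<lfloor>xs k 0\<rfloor> = nat \<lfloor>l 0\<rfloor>) sequentially"
    by (rule eventually_mono) simp
  have tail: "tail_seq (xs k) \<in> Fs (nat \<lfloor>xs k 0\<rfloor>)" for k
    using assms(1) unfolding tagged_domain_def by blast
  from ev_index show "eventually (\<lambda>k. tail_seq (xs k) \<in> Fs (nat \<lfloor>l 0\<rfloor>)) sequentially"
    by (rule eventually_mono) (metis tail)
qed

lemma closed_tagged_domain:
  assumes "\<And>n. closed (Fs n)"
  shows "closed (tagged_domain Fs)"
  unfolding closed_sequential_limits
proof (intro allI impI, elim conjE)
  fix xs l assume xs: "\<forall>n. xs n \<in> tagged_domain Fs" "xs \<longlonglongrightarrow> l"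
  then have "l 0 \<in> \<nat>" and "eventually (\<lambda>k. tail_seq (xs k) \<in> Fs (nat \<lfloor>l 0\<rfloor>)) sequentially"
    using tagged_domain_tendsto by blast+
  moreover from this(2) have "tail_seq l \<in> Fs (nat \<lfloor>l 0\<rfloor>)"
    using Lim_in_closed_set[OF assms _ sequentially_bot tendsto_tail_seq[OF xs(2)]] by blast
  ultimately show "l \<in> tagged_domain Fs"
    unfolding tagged_domain_def by simp
qed

lemma continuous_on_tagged_map:
  assumes "\<And>n. continuous_on (Fs n) (fs n)"
  shows "continuous_on (tagged_domain Fs) (tagged_map fs)"
proof (rule continuous_on_sequentiallyI)
  fix xs l assume xs: "\<forall>n. xs n \<in> tagged_domain Fs" "l \<in> tagged_domain Fs" "xs \<longlonglongrightarrow> l"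
  then have ev_index: "eventually (\<lambda>k. nat \<lfloor>xs k 0\<rfloor> = nat \<lfloor>l 0\<rfloor>) sequentially"
    and ev_tail: "eventually (\<lambda>k. tail_seq (xs k) \<in> Fs (nat \<lfloor>l 0\<rfloor>)) sequentially"
    using tagged_domain_tendsto by blast+
  have "tail_seq l \<in> Fs (nat \<lfloor>l 0\<rfloor>)"
    using xs(2) unfolding tagged_domain_def by blast
  then have "(\<lambda>k. fs (nat \<lfloor>l 0\<rfloor>) (tail_seq (xs k))) \<longlonglongrightarrow> tagged_map fs l"
    unfolding tagged_map_def
    using continuous_on_tendsto_compose[OF assms tendsto_tail_seq[OF xs(3)] _ ev_tail] by blast
  moreover have "eventually (\<lambda>k. fs (nat \<lfloor>l 0\<rfloor>) (tail_seq (xs k)) = tagged_map fs (xs k)) sequentially"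
    using ev_index by (rule eventually_mono) (simp add: tagged_map_def)
  ultimately show "(\<lambda>k. tagged_map fs (xs k)) \<longlonglongrightarrow> tagged_map fs l"
    by (rule Lim_transform_eventually)
qed

lemma tagged_map_image: "tagged_map fs ` tagged_domain Fs = (\<Union>n. fs n ` Fs n)"
proof
  show "tagged_map fs ` tagged_domain Fs \<subseteq> (\<Union>n. fs n ` Fs n)"
    unfolding tagged_domain_def tagged_map_def by blast
  show "(\<Union>n. fs n ` Fs n) \<subseteq> tagged_map fs ` tagged_domain Fs"
  proof
    fix y assume "y \<in> (\<Union>n. fs n ` Fs n)"
    then obtain n z where z: "z \<in> Fs n" "y = fs n z"
      by blast
    define x where "x k = (case k of 0 \<Rightarrow> real n | Suc j \<Rightarrow> z j)" for k
    have "tail_seq x = z" "nat \<lfloor>x 0\<rfloor> = n" "x 0 \<in> \<nat>"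
      unfolding x_def tail_seq_def by simp_all
    then have "x \<in> tagged_domain Fs" "tagged_map fs x = y"
      unfolding tagged_domain_def tagged_map_def using z by simp_all
    then show "y \<in> tagged_map fs ` tagged_domain Fs"
      by blast
  qed
qed

lemma analytic_Union:
  fixes S :: "nat \<Rightarrow> real set"
  assumes "\<And>n. analytic (S n)"
  shows "analytic (\<Union>n. S n)"
proof -
  obtain Fs :: "nat \<Rightarrow> (nat \<Rightarrow> real) set" and fs where
    Fs: "\<And>n. closed (Fs n)" "\<And>n. continuous_on (Fs n) (fs n)" "\<And>n. fs n ` Fs n = S n"
    using analytic_family[of S] assms by metis
  then have "closed (tagged_domain Fs)" "continuous_on (tagged_domain Fs) (tagged_map fs)"
    "tagged_map fs ` tagged_domain Fs = (\<Union>n. S n)"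
    by (simp_all add: closed_tagged_domain continuous_on_tagged_map tagged_map_image)
  then show ?thesis
    unfolding analytic_def by blast
qed

text \<open>Via \<open>prod_encode\<close>, a point of \<open>nat \<Rightarrow> real\<close> codes a whole sequence of such points.\<close>

definition component :: "nat \<Rightarrow> (nat \<Rightarrow> 'a) \<Rightarrow> nat \<Rightarrow> 'a" where
  "component n x = (\<lambda>k. x (prod_encode (n, k)))"

lemma continuous_on_component: "continuous_on UNIV (component n :: (nat \<Rightarrow> 'a::topological_space) \<Rightarrow> _)"
  unfolding component_def
  by (intro continuous_on_coordinatewise_then_product continuous_on_product_coordinates)

lemma component_decode: "component n (\<lambda>m. z (fst (prod_decode m)) (snd (prod_decode m))) = z n"
  unfolding component_def by simp

lemma analytic_Inter:
  fixes S :: "nat \<Rightarrow> real set"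
  assumes "\<And>n. analytic (S n)"
  shows "analytic (\<Inter>n. S n)"
proof -
  obtain Fs :: "nat \<Rightarrow> (nat \<Rightarrow> real) set" and fs where
    Fs: "\<And>n. closed (Fs n)" "\<And>n. continuous_on (Fs n) (fs n)" "\<And>n. fs n ` Fs n = S n"
    using analytic_family[of S] assms by metis
  define G where "G n = component n -` Fs n" for n
  define g where "g n x = fs n (component n x)" for n x
  have closed_G: "closed (G n)" for n
    unfolding G_def using continuous_closed_preimage[OF continuous_on_component closed_UNIV Fs(1)] by simp
  have cont_g: "continuous_on (G n) (g n)" for n
    unfolding g_def
    by (rule continuous_on_compose2[OF Fs(2) continuous_on_subset[OF continuous_on_component]])
      (auto simp: G_def)
  define F where "F = (\<Inter>n. (G n \<inter> G 0) \<inter> (\<lambda>x. g n x - g 0 x) -` {0})"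
  have "closed (G n \<inter> G 0 \<inter> (\<lambda>x. g n x - g 0 x) -` {0})" for n
  proof (rule continuous_closed_preimage)
    show "continuous_on (G n \<inter> G 0) (\<lambda>x. g n x - g 0 x)"
      using continuous_on_subset[OF cont_g[of n], of "G n \<inter> G 0"]
        continuous_on_subset[OF cont_g[of 0], of "G n \<inter> G 0"]
      by (intro continuous_on_diff) auto
    show "closed (G n \<inter> G 0)"
      using closed_G by blast
  qed simp
  then have "closed F"
    unfolding F_def by (simp add: closed_INT)
  moreover have "continuous_on F (g 0)"
    by (rule continuous_on_subset[OF cont_g]) (auto simp: F_def)
  moreover have "g 0 ` F = (\<Inter>n. S n)"
  proof
    show "g 0 ` F \<subseteq> (\<Inter>n. S n)"
    proof
      fix y assume "y \<in> g 0 ` F"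
      then obtain x where "x \<in> F" "y = g 0 x"
        by blast
      then have "component n x \<in> Fs n" "fs n (component n x) = y" for n
        unfolding F_def G_def g_def by auto
      then have "y \<in> fs n ` Fs n" for n
        by (metis image_eqI)
      then show "y \<in> (\<Inter>n. S n)"
        by (simp add: Fs(3))
    qed
    show "(\<Inter>n. S n) \<subseteq> g 0 ` F"
    proof
      fix y assume "y \<in> (\<Inter>n. S n)"
      then have "y \<in> fs n ` Fs n" for n
        by (simp add: Fs(3))
      then have "\<forall>n. \<exists>z. z \<in> Fs n \<and> fs n z = y"
        by (metis imageE)
      then obtain z where z: "\<And>n. z n \<in> Fs n \<and> fs n (z n) = y"
        by metis
      define x where "x m = z (fst (prod_decode m)) (snd (prod_decode m))" for m
      have "component n x = z n" for n
        unfolding x_def by (rule component_decode)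
      then have "x \<in> F" "g 0 x = y"
        unfolding F_def G_def g_def using z by simp_all
      then show "y \<in> g 0 ` F"
        by blast
    qed
  qed
  ultimately show ?thesis
    unfolding analytic_def by blast
qed

lemma open_eq_Union_infdist_ge:
  fixes U :: "'a::metric_space set"
  assumes "open U" "U \<noteq> UNIV"
  shows "U = (\<Union>n. {x. 1 / real (Suc n) \<le> infdist x (- U)})"
proof
  show "U \<subseteq> (\<Union>n. {x. 1 / real (Suc n) \<le> infdist x (- U)})"
  proof
    fix x assume "x \<in> U"
    then have "infdist x (- U) > 0"
      using infdist_pos_not_in_closed[of "- U" x] assms by auto
    then obtain n where "inverse (real (Suc n)) < infdist x (- U)"
      using reals_Archimedean by blast
    then have "x \<in> {x. 1 / real (Suc n) \<le> infdist x (- U)}"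
      by (simp add: inverse_eq_divide)
    then show "x \<in> (\<Union>n. {x. 1 / real (Suc n) \<le> infdist x (- U)})"
      by blast
  qed
  show "(\<Union>n. {x. 1 / real (Suc n) \<le> infdist x (- U)}) \<subseteq> U"
  proof
    fix x assume "x \<in> (\<Union>n. {x. 1 / real (Suc n) \<le> infdist x (- U)})"
    then obtain n where "1 / real (Suc n) \<le> infdist x (- U)"
      by blast
    moreover have "0 < 1 / real (Suc n)"
      by simp
    ultimately have "infdist x (- U) \<noteq> 0"
      by linarith
    then show "x \<in> U"
      using infdist_zero[of x "- U"] by blast
  qed
qed

lemma analytic_open:
  assumes "open U"
  shows "analytic U"
proof (cases "U = UNIV")
  case True
  then show ?thesis
    using analytic_closed[of UNIV] by simp
next
  case False
  have "closed {x::real. 1 / real (Suc n) \<le> infdist x (- U)}" for n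
    by (intro closed_Collect_le continuous_intros)
  then have "analytic (\<Union>n. {x::real. 1 / real (Suc n) \<le> infdist x (- U)})"
    by (rule analytic_Union[OF analytic_closed])
  then show ?thesis
    using open_eq_Union_infdist_ge[OF assms False] by simp
qed

lemma sets_borel_closed: "sets borel = sigma_sets UNIV (Collect closed)"
  unfolding borel_eq_closed by (rule sets_measure_of) simp

lemma analytic_borel:
  assumes "(S :: real set) \<in> sets borel"
  shows "analytic S"
proof -
  have "S \<in> sigma_sets UNIV (Collect closed)"
    using assms by (simp only: sets_borel_closed)
  then have "analytic S \<and> analytic (- S)"
  proof (induction rule: sigma_sets.induct)
    case (Basic C)
    then have "closed C"
      by simp
    then show ?case
      using analytic_closed analytic_open open_Compl by blast
  next
    case Empty
    then show ?case
      using analytic_closed[of "{}"] analytic_closed[of UNIV] by simp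
  next
    case (Compl C)
    then show ?case
      by (simp add: Compl_eq_Diff_UNIV[symmetric])
  next
    case (Union C)
    have "analytic (\<Union>i. C i)"
      by (rule analytic_Union) (use Union.IH in blast)
    moreover have "analytic (\<Inter>i. - C i)"
      by (rule analytic_Inter) (use Union.IH in blast)
    ultimately show ?case
      by (simp add: Compl_UN)
  qed
  then show ?thesis
    by blast
qed


section \<open>Bernstein sets\<close>

lemma card_of_closed_sets:
  "|{K :: 'a::second_countable_topology set. closed K}| \<le>o |UNIV :: (nat \<Rightarrow> bool) set|"
proof -
  obtain B :: "'a set set" where B: "countable B" "topological_basis B"
    using ex_countable_basis by blast
  define code where "code K = (\<lambda>n. from_nat_into B n \<inter> K = {})" for K
  have notin: "x \<notin> K'" if K: "closed K" and code: "code K = code K'" and x: "x \<notin> K" for K K' x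
  proof -
    have "open (- K)" "x \<in> - K"
      using K x by auto
    then obtain b where b: "b \<in> B" "x \<in> b" "b \<subseteq> - K"
      by (rule topological_basisE[OF B(2)])
    then obtain n where n: "from_nat_into B n = b"
      using from_nat_into_surj[OF B(1)] by blast
    have "code K n"
      unfolding code_def n using b(3) by blast
    then have "code K' n"
      using code by simp
    then have "b \<inter> K' = {}"
      unfolding code_def n .
    then show ?thesis
      using b(2) by blast
  qed
  have "inj_on code {K. closed K}"
  proof (rule inj_onI)
    fix K K' assume "K \<in> {K. closed K}" "K' \<in> {K. closed K}" "code K = code K'"
    then have "closed K" "closed K'" "code K = code K'"
      by simp_all
    then have "- K \<subseteq> - K'" "- K' \<subseteq> - K"
      using notin[of K K'] notin[of K' K] by auto
    then show "K = K'"
      by blast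
  qed
  then show ?thesis
    by (intro card_of_ordLeq[THEN iffD1] exI[of _ code]) simp
qed

lemma infinite_UNIV_nat_bool: "infinite (UNIV :: (nat \<Rightarrow> bool) set)"
proof
  assume "finite (UNIV :: (nat \<Rightarrow> bool) set)"
  then have "finite (UNIV :: nat set)"
    by (rule finite_fun_UNIVD1) simp
  then show False
    by simp
qed

text \<open>Enumerate the closed sets of size continuum and split each of them; every uncountable
  Borel set contains such a closed set by the perfect set theorem for analytic sets.\<close>

theorem bernstein_set_exists: "\<exists>B. bernstein_set B"
proof -
  define KK where "KK = {K :: real set. closed K \<and> |UNIV :: (nat \<Rightarrow> bool) set| \<le>o |K|}"
  have "|KK| \<le>o |{K :: real set. closed K}|"
    unfolding KK_def by (rule card_of_mono1) blast
  then have KK_le: "|KK| \<le>o |UNIV :: (nat \<Rightarrow> bool) set|"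
    using card_of_closed_sets by (rule ordLeq_transitive)
  have large: "infinite K \<and> |KK| \<le>o |K|" if "K \<in> KK" for K
  proof
    have K: "|UNIV :: (nat \<Rightarrow> bool) set| \<le>o |K|"
      using that unfolding KK_def by blast
    then show "infinite K"
      using card_of_ordLeq_finite infinite_UNIV_nat_bool by blast
    show "|KK| \<le>o |K|"
      using KK_le K by (rule ordLeq_transitive)
  qed
  obtain S where S: "\<forall>K\<in>KK. K \<inter> S \<noteq> {} \<and> K - S \<noteq> {}"
    using exists_splitting_set[OF large] by blast
  have contains: "\<exists>K\<in>KK. K \<subseteq> Z" if Z: "Z \<in> sets borel" "uncountable Z" for Z
  proof -
    obtain F :: "(nat \<Rightarrow> real) set" and f where "closed F" "continuous_on F f" "f ` F = Z"
      using analytic_borel[OF Z(1)] unfolding analytic_def by blast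
    then interpret uncountable_image F f
      using Z(2) by unfold_locales auto
    obtain K where "closed K" "K \<subseteq> f ` F" "|UNIV :: (nat \<Rightarrow> bool) set| \<le>o |K|"
      using closed_continuum_subset_image by blast
    then have "K \<in> KK" "K \<subseteq> Z"
      unfolding KK_def using \<open>f ` F = Z\<close> by simp_all
    then show ?thesis
      by blast
  qed
  have "Z \<inter> S \<noteq> {} \<and> Z - S \<noteq> {}" if Z: "Z \<in> sets borel" "uncountable Z" for Z
  proof -
    obtain K where "K \<in> KK" "K \<subseteq> Z"
      using contains[OF Z] by blast
    then show ?thesis
      using S by blast
  qed
  then have "bernstein_set S"
    unfolding bernstein_set_def by auto
  then show ?thesis ..
qed

lemma bernstein_set_Compl: "bernstein_set B \<Longrightarrow> bernstein_set (- B)"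
  unfolding bernstein_set_def by (metis Diff_Compl Diff_eq)

lemma uncountable_Int_unit_interval:
  fixes Z :: "real set"
  assumes "uncountable Z"
  obtains k :: int where "uncountable (Z \<inter> {of_int k..<of_int k + 1})"
proof (rule ccontr)
  assume "\<not> thesis"
  then have "countable (Z \<inter> {of_int k..<of_int k + 1})" for k
    using that by blast
  then have "countable (\<Union>k::int. Z \<inter> {of_int k..<of_int k + 1})"
    by (intro countable_UN) auto
  moreover have "Z \<subseteq> (\<Union>k::int. Z \<inter> {of_int k..<of_int k + 1})"
  proof
    fix x assume "x \<in> Z"
    then have "x \<in> Z \<inter> {of_int \<lfloor>x\<rfloor>..<of_int \<lfloor>x\<rfloor> + 1}"
      by simp
    then show "x \<in> (\<Union>k::int. Z \<inter> {of_int k..<of_int k + 1})"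
      by blast
  qed
  ultimately show False
    using assms countable_subset by blast
qed

text \<open>\<open>S \<inter> [0,1)\<close> translated to the even unit intervals and its complement to the odd ones,
  so that a shift by one maps the set onto its complement.\<close>

definition alternate :: "real set \<Rightarrow> real set" where
  "alternate S = {x. frac x \<in> S \<longleftrightarrow> even \<lfloor>x\<rfloor>}"

lemma alternate_shift: "x + 1 \<in> alternate S \<longleftrightarrow> x \<notin> alternate S"
  unfolding alternate_def by (simp add: frac_1_eq)

lemma alternate_unit_interval:
  assumes "0 \<le> w" "w < 1"
  shows "w + of_int k \<in> alternate S \<longleftrightarrow> (w \<in> S \<longleftrightarrow> even k)"
proof -
  have "\<lfloor>w + of_int k\<rfloor> = k"
    using assms by linarith
  then have "frac (w + of_int k) = w"
    unfolding frac_def by simp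
  with \<open>\<lfloor>w + of_int k\<rfloor> = k\<close> show ?thesis
    unfolding alternate_def by simp
qed

lemma borel_translate_vimage:
  assumes "Z \<in> sets borel"
  shows "(\<lambda>w::real. w + c) -` Z \<in> sets borel"
proof -
  have "(\<lambda>w::real. w + c) \<in> borel_measurable borel"
    by (intro borel_measurable_continuous_onI continuous_intros)
  then have "(\<lambda>w. w + c) -` Z \<inter> space borel \<in> sets borel"
    using assms by (rule measurable_sets)
  then show ?thesis
    by simp
qed

lemma uncountable_translate_vimage:
  assumes "uncountable Z"
  shows "uncountable ((\<lambda>w::real. w + c) -` Z)"
proof
  assume "countable ((\<lambda>w::real. w + c) -` Z)"
  then have "countable ((\<lambda>w. w + c) ` ((\<lambda>w::real. w + c) -` Z))"
    by (rule countable_image)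
  moreover have "surj (\<lambda>w::real. w + c)"
    by (rule surjI[of _ "\<lambda>w. w - c"]) simp
  ultimately show False
    using assms by (simp add: image_vimage_eq)
qed

lemma bernstein_set_alternate:
  assumes S: "bernstein_set S"
  shows "bernstein_set (alternate S)"
  unfolding bernstein_set_def
proof (intro ballI impI)
  fix Z :: "real set" assume Z: "Z \<in> sets borel" "uncountable Z"
  obtain k :: int where k: "uncountable (Z \<inter> {of_int k..<of_int k + 1})"
    using Z(2) by (rule uncountable_Int_unit_interval)
  define W where "W = (\<lambda>w. w + of_int k) -` (Z \<inter> {of_int k..<of_int k + 1})"
  have "W \<in> sets borel"
    unfolding W_def using Z(1) by (intro borel_translate_vimage) simp
  moreover have "uncountable W"
    unfolding W_def using k by (rule uncountable_translate_vimage)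
  ultimately have "W \<inter> S \<noteq> {} \<and> W - S \<noteq> {}"
    using S unfolding bernstein_set_def by simp
  then obtain w1 w2 where w: "w1 \<in> W" "w1 \<in> S" "w2 \<in> W" "w2 \<notin> S"
    by blast
  have W: "0 \<le> w" "w < 1" "w + of_int k \<in> Z" if "w \<in> W" for w
    using that unfolding W_def by auto
  have "w1 + of_int k \<in> alternate S \<longleftrightarrow> even k" "w2 + of_int k \<in> alternate S \<longleftrightarrow> odd k"
    using w W alternate_unit_interval by simp_all
  then show "Z \<inter> alternate S \<noteq> {} \<and> Z - alternate S \<noteq> {}"
    using W(3)[OF w(1)] W(3)[OF w(3)] by (cases "even k") auto
qed

lemma not_2_covering_if_shift_complements:
  assumes "d \<noteq> 0" "\<And>x. x + d \<in> A \<longleftrightarrow> x \<notin> A"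
  shows "\<not> n_covering 2 A"
proof
  assume "n_covering 2 A"
  moreover have "finite {0, d} \<and> card {0, d} = 2"
    using assms(1) by simp
  ultimately obtain x where "(\<lambda>b. b + x) ` {0, d} \<subseteq> A"
    unfolding n_covering_def by blast
  then have "x \<in> A" "x + d \<in> A"
    by (auto simp: add.commute)
  with assms(2) show False
    by blast
qed

theorem mainTheorem5:
  shows "\<exists>A B :: real set. A \<inter> B = {} \<and> A \<union> B = UNIV \<and>
           bernstein_set A \<and> bernstein_set B \<and>
           \<not> n_covering 2 A \<and> \<not> n_covering 2 B"
proof -
  obtain S where "bernstein_set S"
    using bernstein_set_exists by blast
  then have "bernstein_set (alternate S)" "bernstein_set (- alternate S)"
    using bernstein_set_alternate bernstein_set_Compl by blast+
  moreover have "\<not> n_covering 2 (alternate S)" "\<not> n_covering 2 (- alternate S)"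
    by (rule not_2_covering_if_shift_complements[of 1], simp, simp add: alternate_shift)+
  ultimately show ?thesis
    by (intro exI[of _ "alternate S"] exI[of _ "- alternate S"]) auto
qed

end
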